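(* Let $a_n>0$ with $a_n\to0$, and let $x_n=O_p(1)$ be continuous random variables with densities $p_n$ such that (i) $\mathbb E|x_n|\le C$ for some constant $C$ and all $n$; (ii) $1+a_nx_n>0$ almost surely; (iii) $a_n^{-2}\sup_{x\le-1/(2a_n)}p_n(x)\to0$. Then $\mathbb E\ln(1+a_nx_n)=O(a_n)$. *)

theory Defs
  imports "HOL-Probability.Probability" "HOL-Library.Landau_Symbols"
begin

end

theory Submission
  imports Defs
begin

text \<open>
  Split \<open>ln (1 + a x)\<close> according to whether \<open>a x \<ge> -1/2\<close>. There \<open>\<bar>ln (1 + a x)\<bar> \<le> 2 a \<bar>x\<bar>\<close>,
  whose expectation is \<open>O(a)\<close> by the first-moment bound. On the remaining range
  \<open>-1/a < x < -1/(2a)\<close> the density is at most \<open>o(a\<^sup>2)\<close>, while the substitution \<open>v = 1 + a x\<close>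
  shows \<open>\<integral> -ln (1 + a x) dx\<close> over that range to be \<open>O(1/a)\<close>; the product is \<open>o(a)\<close>.
\<close>

lemma abs_ln_one_plus_le:
  fixes u :: real
  assumes "u \<ge> -1/2"
  shows "\<bar>ln (1 + u)\<bar> \<le> 2 * \<bar>u\<bar>"
proof (cases "u \<ge> 0")
  case True
  then show ?thesis using ln_le_minus_one[of "1 + u"] by auto
next
  case False
  have "- ln (1 + u) = ln (1 / (1 + u))" using assms by (simp add: ln_div)
  also have "\<dots> \<le> 1 / (1 + u) - 1" using assms by (intro ln_le_minus_one) auto
  also have "\<dots> = - u / (1 + u)" using assms by (simp add: field_simps)
  also have "\<dots> \<le> - u / (1/2)" using False assms by (intro divide_left_mono) auto
  finally show ?thesis using False assms by simp
qed

lemma ennreal_abs_ln_one_plus_mult_le: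
  fixes a t :: real
  assumes a: "a > 0" and pos: "1 + a * t > 0"
  shows "ennreal \<bar>ln (1 + a * t)\<bar>
    \<le> ennreal (2 * a * \<bar>t\<bar>) + indicator {-1/a<..<-1/(2*a)} t * ennreal (- ln (1 + a * t))"
proof (cases "a * t \<ge> -1/2")
  case True
  then have "\<bar>ln (1 + a * t)\<bar> \<le> 2 * a * \<bar>t\<bar>"
    using abs_ln_one_plus_le[of "a * t"] a by (simp add: abs_mult)
  then show ?thesis by (intro add_increasing2 ennreal_leI) auto
next
  case False
  then have "t \<in> {-1/a<..<-1/(2*a)}" using pos a by (auto simp: field_simps)
  moreover have "ln (1 + a * t) \<le> 0" using False pos by simp
  ultimately show ?thesis by (simp add: add_increasing)
qed

lemma nn_integral_neg_ln_le:
  "(\<integral>\<^sup>+ v. indicator {0<..<1/2} v * ennreal (- ln v) \<partial>lborel) \<le> 4"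
proof -
  have powr_has_integral: "((\<lambda>v. v powr (-1/2::real)) has_integral 2) {0..1}"
    using has_integral_powr_from_0[of "-1/2" 1] by simp
  have powr_integral: "(\<integral>\<^sup>+ v. ennreal (v powr (-1/2)) * indicator {0..1} v \<partial>lborel) = ennreal 2"
    by (rule nn_integral_has_integral_lebesgue'[OF _ powr_has_integral]) simp
  \<comment> \<open>Dominate \<open>-ln v = 2 ln (v\<^sup>-\<^sup>1\<^sup>/\<^sup>2)\<close> by the integrable singularity \<open>2 v\<^sup>-\<^sup>1\<^sup>/\<^sup>2\<close>.\<close>
  have "(\<integral>\<^sup>+ v. indicator {0<..<1/2} v * ennreal (- ln v) \<partial>lborel)
      \<le> (\<integral>\<^sup>+ v. 2 * (ennreal (v powr (-1/2)) * indicator {0..1} v) \<partial>lborel)"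
  proof (intro nn_integral_mono)
    fix v :: real
    show "indicator {0<..<1/2} v * ennreal (- ln v) \<le> 2 * (ennreal (v powr (-1/2)) * indicator {0..1} v)"
    proof (cases "0 < v \<and> v < 1/2")
      case True
      define y where "y = v powr (-1/2)"
      have "v powr (1/2) \<le> 1" using True powr_mono2[of "1/2" v 1] by auto
      then have y_ge_1: "y \<ge> 1" using True by (simp add: y_def powr_minus_divide)
      have "- ln v = 2 * ln y" using True by (simp add: y_def ln_powr)
      also have "\<dots> \<le> 2 * y" using ln_le_minus_one[of y] y_ge_1 by simp
      finally have "ennreal (- ln v) \<le> ennreal 2 * ennreal y"
        using y_ge_1 by (subst ennreal_mult[symmetric]) (auto intro: ennreal_leI)
      then show ?thesis using True by (simp add: indicator_def y_def)
    qed (auto simp: indicator_def)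
  qed
  also have "\<dots> = 4"
    using powr_integral by (subst nn_integral_cmult) (auto simp flip: ennreal_numeral ennreal_mult)
  finally show ?thesis .
qed

lemma nn_integral_neg_ln_one_plus_mult_le:
  fixes a :: real
  assumes a: "a > 0"
  shows "(\<integral>\<^sup>+ t. indicator {-1/a<..<-1/(2*a)} t * ennreal (- ln (1 + a * t)) \<partial>lborel) \<le> ennreal (4/a)"
proof -
  have "(\<integral>\<^sup>+ t. indicator {-1/a<..<-1/(2*a)} t * ennreal (- ln (1 + a * t)) \<partial>lborel)
     = ennreal \<bar>1/a\<bar> * (\<integral>\<^sup>+ v. indicator {-1/a<..<-1/(2*a)} (-1/a + (1/a) * v)
                          * ennreal (- ln (1 + a * (-1/a + (1/a) * v))) \<partial>lborel)"
    using a by (intro nn_integral_real_affine) auto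
  also have "(\<integral>\<^sup>+ v. indicator {-1/a<..<-1/(2*a)} (-1/a + (1/a) * v)
                   * ennreal (- ln (1 + a * (-1/a + (1/a) * v))) \<partial>lborel)
     = (\<integral>\<^sup>+ v. indicator {0<..<1/2} v * ennreal (- ln v) \<partial>lborel)"
  proof (intro nn_integral_cong)
    fix v :: real
    have "1 + a * (-1/a + (1/a) * v) = v" using a by (simp add: field_simps)
    moreover have "(-1/a + (1/a) * v \<in> {-1/a<..<-1/(2*a)}) = (v \<in> {0<..<1/2})"
      using a by (auto simp: field_simps)
    ultimately show "indicator {-1/a<..<-1/(2*a)} (-1/a + (1/a) * v)
        * ennreal (- ln (1 + a * (-1/a + (1/a) * v))) = indicator {0<..<1/2} v * ennreal (- ln v)"
      by (simp add: indicator_def)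
  qed
  also have "ennreal \<bar>1/a\<bar> * \<dots> \<le> ennreal (1/a) * ennreal 4"
    using a nn_integral_neg_ln_le by (simp add: mult_left_mono)
  also have "\<dots> = ennreal (4/a)" using a by (subst ennreal_mult[symmetric]) auto
  finally show ?thesis .
qed

lemma nn_integral_abs_ln_one_plus_mult_le:
  fixes M :: "'a measure" and X :: "'a \<Rightarrow> real" and p :: "real \<Rightarrow> ennreal" and a :: real
  assumes a: "a > 0" and X: "distributed M lborel X p"
    and pos: "AE \<omega> in M. 1 + a * X \<omega> > 0"
  shows "(\<integral>\<^sup>+ \<omega>. ennreal \<bar>ln (1 + a * X \<omega>)\<bar> \<partial>M)
     \<le> ennreal (2*a) * (\<integral>\<^sup>+ \<omega>. ennreal \<bar>X \<omega>\<bar> \<partial>M) + (SUP t\<in>{..-1/(2*a)}. p t) * ennreal (4/a)"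
proof -
  define g where "g t = indicator {-1/a<..<-1/(2*a)} t * ennreal (- ln (1 + a * t))" for t :: real
  define S where "S = (SUP t\<in>{..-1/(2*a)}. p t)"
  have [measurable]: "X \<in> borel_measurable M" "p \<in> borel_measurable borel"
    using distributed_measurable[OF X] distributed_borel_measurable[OF X] by simp_all
  have [measurable]: "g \<in> borel_measurable borel" unfolding g_def by measurable
  have "(\<integral>\<^sup>+ \<omega>. ennreal \<bar>ln (1 + a * X \<omega>)\<bar> \<partial>M)
     \<le> (\<integral>\<^sup>+ \<omega>. ennreal (2 * a * \<bar>X \<omega>\<bar>) + g (X \<omega>) \<partial>M)"
    unfolding g_def
    by (intro nn_integral_mono_AE eventually_mono[OF pos] ennreal_abs_ln_one_plus_mult_le[OF a])
  also have "\<dots> = ennreal (2*a) * (\<integral>\<^sup>+ \<omega>. ennreal \<bar>X \<omega>\<bar> \<partial>M) + (\<integral>\<^sup>+ t. g t \<partial>distr M lborel X)"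
    using a by (subst nn_integral_add, simp_all add: nn_integral_distr ennreal_mult nn_integral_cmult)
  also have "(\<integral>\<^sup>+ t. g t \<partial>distr M lborel X) = (\<integral>\<^sup>+ t. p t * g t \<partial>lborel)"
    unfolding distributed_distr_eq_density[OF X] by (simp add: nn_integral_density)
  also have "\<dots> \<le> (\<integral>\<^sup>+ t. S * g t \<partial>lborel)"
  proof (intro nn_integral_mono)
    fix t :: real
    show "p t * g t \<le> S * g t"
    proof (cases "t \<in> {-1/a<..<-1/(2*a)}")
      case True
      then have "p t \<le> S" unfolding S_def by (intro SUP_upper) auto
      then show ?thesis by (intro mult_right_mono) auto
    qed (simp add: g_def)
  qed
  also have "\<dots> \<le> S * ennreal (4/a)"
    using nn_integral_neg_ln_one_plus_mult_le[OF a]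
    by (simp add: nn_integral_cmult g_def mult_left_mono)
  finally show ?thesis unfolding S_def by (simp add: add_mono)
qed

lemma nn_integral_abs_ln_one_plus_mult_le_linear:
  fixes M :: "'a measure" and X :: "'a \<Rightarrow> real" and p :: "real \<Rightarrow> ennreal" and a C :: real
  assumes a: "a > 0" and C: "C \<ge> 0" and X: "distributed M lborel X p"
    and pos: "AE \<omega> in M. 1 + a * X \<omega> > 0"
    and moment: "(\<integral>\<^sup>+ \<omega>. ennreal \<bar>X \<omega>\<bar> \<partial>M) \<le> ennreal C"
    and tail: "(SUP t\<in>{..-1/(2*a)}. p t) \<le> ennreal (a\<^sup>2)"
  shows "(\<integral>\<^sup>+ \<omega>. ennreal \<bar>ln (1 + a * X \<omega>)\<bar> \<partial>M) \<le> ennreal ((2 * C + 4) * a)"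
proof -
  have "(\<integral>\<^sup>+ \<omega>. ennreal \<bar>ln (1 + a * X \<omega>)\<bar> \<partial>M)
      \<le> ennreal (2*a) * ennreal C + ennreal (a\<^sup>2) * ennreal (4/a)"
    using nn_integral_abs_ln_one_plus_mult_le[OF a X pos]
  proof (rule order_trans)
    show "ennreal (2*a) * (\<integral>\<^sup>+ \<omega>. ennreal \<bar>X \<omega>\<bar> \<partial>M) + (SUP t\<in>{..-1/(2*a)}. p t) * ennreal (4/a)
        \<le> ennreal (2*a) * ennreal C + ennreal (a\<^sup>2) * ennreal (4/a)"
      using moment tail by (intro add_mono mult_left_mono mult_right_mono) auto
  qed
  also have "\<dots> = ennreal (2 * a * C + a\<^sup>2 * (4/a))"
    using a C by (simp flip: ennreal_mult ennreal_plus)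
  also have "2 * a * C + a\<^sup>2 * (4/a) = (2 * C + 4) * a"
    using a by (simp add: power2_eq_square field_simps)
  finally show ?thesis .
qed

lemma eventually_ennreal_le_of_tendsto_0:
  fixes b :: "nat \<Rightarrow> real" and s :: "nat \<Rightarrow> ennreal"
  assumes b: "\<And>n. b n > 0" and lim: "(\<lambda>n. ennreal (1 / b n) * s n) \<longlonglongrightarrow> 0"
  shows "\<forall>\<^sub>F n in sequentially. s n \<le> ennreal (b n)"
  using order_tendstoD(2)[OF lim, of 1]
proof (rule eventually_mono, simp)
  fix n
  assume less_1: "ennreal (1 / b n) * s n < 1"
  have "s n = ennreal (b n) * (ennreal (1 / b n) * s n)"
    using b[of n] by (simp add: mult.assoc[symmetric] flip: ennreal_mult)
  also have "\<dots> \<le> ennreal (b n)"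
    using less_1 mult_left_mono[of _ 1 "ennreal (b n)"] by simp
  finally show "s n \<le> ennreal (b n)" .
qed

lemma integrable_and_norm_integral_le_of_nn_integral:
  fixes f :: "'a \<Rightarrow> real"
  assumes f: "f \<in> borel_measurable M" and B: "B \<ge> 0"
    and bound: "(\<integral>\<^sup>+ \<omega>. ennreal (norm (f \<omega>)) \<partial>M) \<le> ennreal B"
  shows "integrable M f" and "norm (\<integral>\<omega>. f \<omega> \<partial>M) \<le> B"
proof -
  show int: "integrable M f"
    using f bound by (intro integrableI_bounded) (auto simp: top_unique intro: le_less_trans)
  show "norm (\<integral>\<omega>. f \<omega> \<partial>M) \<le> B"
    using order_trans[OF integral_norm_bound_ennreal[OF int] bound] B by (simp add: ennreal_le_iff)
qed

theorem lemma3: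
  fixes M :: "nat \<Rightarrow> 'a measure"
    and x :: "nat \<Rightarrow> 'a \<Rightarrow> real"
    and p :: "nat \<Rightarrow> real \<Rightarrow> ennreal"
    and a :: "nat \<Rightarrow> real"
    and C :: real
  assumes prob: "\<And>n. prob_space (M n)"
    and a_pos: "\<And>n. a n > 0"
    and a_lim: "a \<longlonglongrightarrow> 0"
    and dens: "\<And>n. distributed (M n) lborel (x n) (p n)"
    and Op1: "\<And>e. e > 0 \<Longrightarrow> \<exists>K. \<forall>n. measure (M n) {\<omega> \<in> space (M n). \<bar>x n \<omega>\<bar> > K} < e"
    and mom: "\<And>n. (\<integral>\<^sup>+ \<omega>. ennreal \<bar>x n \<omega>\<bar> \<partial>M n) \<le> ennreal C"
    and pos: "\<And>n. AE \<omega> in M n. 1 + a n * x n \<omega> > 0"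
    and tail: "(\<lambda>n. ennreal (1 / (a n)\<^sup>2) * (SUP t \<in> {..- 1 / (2 * a n)}. p n t)) \<longlonglongrightarrow> 0"
  shows "(\<forall>\<^sub>F n in sequentially. integrable (M n) (\<lambda>\<omega>. ln (1 + a n * x n \<omega>)))
    \<and> (\<lambda>n. \<integral>\<omega>. ln (1 + a n * x n \<omega>) \<partial>M n) \<in> O(a)"
proof -
  define K where "K = 2 * max C 0 + 4"
  have mom': "(\<integral>\<^sup>+ \<omega>. ennreal \<bar>x n \<omega>\<bar> \<partial>M n) \<le> ennreal (max C 0)" for n
    using mom[of n] by (rule order_trans) (simp add: ennreal_leI)
  have "\<forall>\<^sub>F n in sequentially. (SUP t \<in> {..- 1 / (2 * a n)}. p n t) \<le> ennreal ((a n)\<^sup>2)"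
    by (rule eventually_ennreal_le_of_tendsto_0[where b = "\<lambda>n. (a n)\<^sup>2", OF _ tail]) (simp add: a_pos[THEN less_imp_neq, symmetric])
  then have bound: "\<forall>\<^sub>F n in sequentially.
      (\<integral>\<^sup>+ \<omega>. ennreal (norm (ln (1 + a n * x n \<omega>))) \<partial>M n) \<le> ennreal (K * a n)"
    unfolding K_def real_norm_def
    by (rule eventually_mono) (intro nn_integral_abs_ln_one_plus_mult_le_linear[OF a_pos _ dens pos mom']; simp)
  have [measurable]: "x n \<in> borel_measurable (M n)" for n
    using distributed_measurable[OF dens] by simp
  have "\<forall>\<^sub>F n in sequentially. integrable (M n) (\<lambda>\<omega>. ln (1 + a n * x n \<omega>))
      \<and> norm (\<integral>\<omega>. ln (1 + a n * x n \<omega>) \<partial>M n) \<le> K * norm (a n)"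
    using bound
  proof eventually_elim
    case (elim n)
    have "K * a n \<ge> 0" using a_pos[of n] by (simp add: K_def)
    note integral_bounds = integrable_and_norm_integral_le_of_nn_integral[OF _ this elim]
    show ?case
      using integral_bounds a_pos[of n] by auto
  qed
  then have "\<forall>\<^sub>F n in sequentially. integrable (M n) (\<lambda>\<omega>. ln (1 + a n * x n \<omega>))"
    and "\<forall>\<^sub>F n in sequentially. norm (\<integral>\<omega>. ln (1 + a n * x n \<omega>) \<partial>M n) \<le> K * norm (a n)"
    by (simp_all add: eventually_conj_iff)
  then show ?thesis by (blast intro: bigoI)
qed

end
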